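(* Let $N\in\mathbb{N}$, $N\geqslant 2$, and let $f:[0,1]\times\mathbb{R}\to\mathbb{R}$ satisfy: (C(c)) $f$ is continuous on $[0,1]\times\mathbb{R}$ and has a continuous partial derivative $f_x$ with respect to the second variable; (D(f)) there exist positive constants $A,B$ with $A<1$ such that $|f(t,x)|\leqslant A|x|+B$ for all $t\in[0,1]$, $x\in\mathbb{R}$; (D($f_x$)) $\inf_{[0,1]\times\mathbb{R}} f_x>-1$. Then the operator $D_N:(\mathbb{E}_N,\|\cdot\|_{\mathbb{E}_N})\to(\mathbb{E}_N,\|\cdot\|_N)$ is a diffeomorphism.
   Context: $\mathbb{E}_N$ is the space of functions $x:\{0,1,\dots,N\}\to\mathbb{R}$ with $x(0)=x(N)=0$ (extended by $x(k)=0$ for $k\notin\{0,\dots,N\}$). $\Delta x(k-1)=x(k)-x(k-1)$, $\Delta^2 x(k-1)=x(k+1)-2x(k)+x(k-1)$. Norms: $\|x\|_N=(\sum_{i=1}^{N-1}|x(i)|^2)^{1/2}$, $\|x\|_{\mathbb{E}_N}=(\sum_{i=1}^{N-1}|\Delta^2x(i-1)|^2)^{1/2}$. The operator $D_N$ is defined by $(D_Nx)(k)=\Delta^2x(k-1)-\frac{1}{N^2}f(\frac{k}{N},x(k))$ for $k=1,\dots,N-1$ and $(D_Nx)(0)=(D_Nx)(N)=0$. A diffeomorphism is a $C^1$ bijection with $C^1$ inverse. *)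

theory Defs
  imports "HOL-Analysis.Analysis"
begin

text \<open>The space E_N: functions on nat vanishing at 0 and at every k >= N
  (i.e. x(0) = x(N) = 0, extended by zero outside {0..N}).\<close>
definition EN :: "nat \<Rightarrow> (nat \<Rightarrow> real) set" where
  "EN N = {x. \<forall>k. (k = 0 \<or> N \<le> k) \<longrightarrow> x k = 0}"

text \<open>delta2 x k denotes Delta^2 x(k-1) = x(k+1) - 2 x(k) + x(k-1).\<close>
definition delta2 :: "(nat \<Rightarrow> real) \<Rightarrow> nat \<Rightarrow> real" where
  "delta2 x k = x (Suc k) - 2 * x k + x (k - 1)"

definition normN :: "nat \<Rightarrow> (nat \<Rightarrow> real) \<Rightarrow> real" where
  "normN N x = sqrt (\<Sum>i=1..N-1. (x i)\<^sup>2)"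

definition normEN :: "nat \<Rightarrow> (nat \<Rightarrow> real) \<Rightarrow> real" where
  "normEN N x = sqrt (\<Sum>i=1..N-1. (delta2 x i)\<^sup>2)"

definition DN :: "nat \<Rightarrow> (real \<Rightarrow> real \<Rightarrow> real) \<Rightarrow> (nat \<Rightarrow> real) \<Rightarrow> (nat \<Rightarrow> real)" where
  "DN N f x = (\<lambda>k. if 1 \<le> k \<and> k \<le> N - 1
      then delta2 x k - f (real k / real N) (x k) / (real N)\<^sup>2 else 0)"

definition lin_on :: "(nat \<Rightarrow> real) set \<Rightarrow> ((nat \<Rightarrow> real) \<Rightarrow> (nat \<Rightarrow> real)) \<Rightarrow> bool" where
  "lin_on S L \<longleftrightarrow> (\<forall>h\<in>S. L h \<in> S) \<and>
     (\<forall>h\<in>S. \<forall>g\<in>S. L (\<lambda>k. h k + g k) = (\<lambda>k. L h k + L g k)) \<and>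
     (\<forall>h\<in>S. \<forall>c::real. L (\<lambda>k. c * h k) = (\<lambda>k. c * L h k))"

definition has_deriv_on ::
  "((nat \<Rightarrow> real) \<Rightarrow> real) \<Rightarrow> ((nat \<Rightarrow> real) \<Rightarrow> real) \<Rightarrow> (nat \<Rightarrow> real) set \<Rightarrow>
   ((nat \<Rightarrow> real) \<Rightarrow> (nat \<Rightarrow> real)) \<Rightarrow> ((nat \<Rightarrow> real) \<Rightarrow> (nat \<Rightarrow> real)) \<Rightarrow> (nat \<Rightarrow> real) \<Rightarrow> bool" where
  "has_deriv_on n1 n2 S F L x \<longleftrightarrow> lin_on S L \<and>
     (\<forall>e>0. \<exists>d>0. \<forall>h\<in>S. n1 h < d \<longrightarrow>
        n2 (\<lambda>k. F (\<lambda>j. x j + h j) k - F x k - L h k) \<le> e * n1 h)"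

definition opnorm ::
  "((nat \<Rightarrow> real) \<Rightarrow> real) \<Rightarrow> ((nat \<Rightarrow> real) \<Rightarrow> real) \<Rightarrow> (nat \<Rightarrow> real) set \<Rightarrow>
   ((nat \<Rightarrow> real) \<Rightarrow> (nat \<Rightarrow> real)) \<Rightarrow> real" where
  "opnorm n1 n2 S L = Sup {n2 (L h) | h. h \<in> S \<and> n1 h \<le> 1}"

definition C1_on ::
  "((nat \<Rightarrow> real) \<Rightarrow> real) \<Rightarrow> ((nat \<Rightarrow> real) \<Rightarrow> real) \<Rightarrow> (nat \<Rightarrow> real) set \<Rightarrow>
   ((nat \<Rightarrow> real) \<Rightarrow> (nat \<Rightarrow> real)) \<Rightarrow> bool" where
  "C1_on n1 n2 S F \<longleftrightarrow> (\<exists>F'. (\<forall>x\<in>S. has_deriv_on n1 n2 S F (F' x) x) \<and>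
     (\<forall>x\<in>S. \<forall>e>0. \<exists>d>0. \<forall>y\<in>S. n1 (\<lambda>k. y k - x k) < d \<longrightarrow>
        opnorm n1 n2 S (\<lambda>h k. F' y h k - F' x h k) \<le> e))"

definition diffeo_on ::
  "((nat \<Rightarrow> real) \<Rightarrow> real) \<Rightarrow> ((nat \<Rightarrow> real) \<Rightarrow> real) \<Rightarrow> (nat \<Rightarrow> real) set \<Rightarrow>
   ((nat \<Rightarrow> real) \<Rightarrow> (nat \<Rightarrow> real)) \<Rightarrow> bool" where
  "diffeo_on n1 n2 S F \<longleftrightarrow> bij_betw F S S \<and> C1_on n1 n2 S F \<and>
     C1_on n2 n1 S (inv_into S F)"

end

theory Submission
  imports Defs
begin

text \<open>
  Write D_N x = Delta^2 x - g(x)/N^2 with the node nonlinearities g_k = f(k/N, -). The discrete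
  Poincare inequality sum x_k^2 <= N^2 sum (-Delta^2 x_k) x_k together with g_k' >= m > -1 makes
  D_N strongly monotone: <D_N y - D_N x, x - y> >= (1 + m)/N^2 ||x - y||^2. This gives injectivity
  and a Lipschitz inverse. For surjectivity, a minimiser of ||D_N x - w|| exists by coercivity,
  and its residual r satisfies <r, D r> = 0 for the linearisation D, which forces r = 0 by the
  same estimate. The derivative h \<mapsto> Delta^2 h - g'(x) h/N^2 depends continuously on x
  coordinatewise and has inverses bounded uniformly in x, so the inverse of D_N is C^1 as well;
  on the finite-dimensional space E_N the two norms are equivalent, which transfers all estimates.
\<close>

lemma deriv_ge_imp_monotone_increment:
  fixes g g' :: "real \<Rightarrow> real"
  assumes "\<And>s. (g has_real_derivative g' s) (at s)" and "\<And>s. m \<le> g' s"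
  shows "m * (a - b)\<^sup>2 \<le> (g a - g b) * (a - b)"
proof -
  define \<phi> where "\<phi> s = g s - m * s" for s
  have "(\<phi> has_real_derivative g' s - m) (at s)" for s
    unfolding \<phi>_def using assms(1) by (auto intro!: derivative_eq_intros)
  then have mono: "\<phi> u \<le> \<phi> v" if "u \<le> v" for u v
    using DERIV_nonneg_imp_nondecreasing[OF that] assms(2) by (metis diff_ge_0_iff_ge)
  have "0 \<le> (\<phi> a - \<phi> b) * (a - b)"
    using mono[of a b] mono[of b a] by (cases "a \<le> b") (auto intro: mult_nonpos_nonpos)
  then show ?thesis by (simp add: \<phi>_def power2_eq_square algebra_simps)
qed

lemma uniform_delta_finite:
  fixes P :: "'k \<Rightarrow> real \<Rightarrow> bool"
  assumes "finite K" and "\<And>k. k \<in> K \<Longrightarrow> \<exists>d>0. \<forall>u. \<bar>u\<bar> < d \<longrightarrow> P k u"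
  shows "\<exists>d>0. \<forall>k\<in>K. \<forall>u. \<bar>u\<bar> < d \<longrightarrow> P k u"
  using assms
proof (induction K rule: finite_induct)
  case (insert a K)
  then obtain d1 d2 where "d1 > 0" "\<forall>k\<in>K. \<forall>u. \<bar>u\<bar> < d1 \<longrightarrow> P k u"
    and "d2 > 0" "\<forall>u. \<bar>u\<bar> < d2 \<longrightarrow> P a u"
    by (metis insertCI)
  then show ?case by (intro exI[of _ "min d1 d2"]) auto
qed (auto intro: exI[of _ 1])

lemma real_derivative_eps_delta:
  assumes "(g has_real_derivative D) (at a)" and "0 < e"
  shows "\<exists>d>0. \<forall>u. \<bar>u\<bar> < d \<longrightarrow> \<bar>g (a + u) - g a - D * u\<bar> \<le> e * \<bar>u\<bar>"
proof -
  obtain d where "d > 0"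
    and d: "\<forall>y. norm (y - a) < d \<longrightarrow> norm (g y - g a - D * (y - a)) \<le> e * norm (y - a)"
    using assms unfolding has_field_derivative_def has_derivative_at_alt by blast
  then show ?thesis by (intro exI[of _ d]) (auto dest: spec[of _ "a + _"])
qed

lemma continuous_eps_delta:
  assumes "continuous_on UNIV (g :: real \<Rightarrow> real)" and "0 < e"
  shows "\<exists>d>0. \<forall>u. \<bar>u\<bar> < d \<longrightarrow> \<bar>g (a + u) - g a\<bar> \<le> e"
proof -
  obtain d where "d > 0" and d: "\<forall>y. dist y a < d \<longrightarrow> dist (g y) (g a) < e"
    using assms unfolding continuous_on_iff by blast
  then show ?thesis by (intro exI[of _ d]) (auto simp: dist_real_def dest: spec[of _ "a + _"])
qed

lemma compact_PiE_UNIV: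
  assumes "\<And>i. compact (T i)"
  shows "compact (PiE UNIV (T :: nat \<Rightarrow> real set))"
proof -
  have "compactin (product_topology (\<lambda>i. euclidean) UNIV) (PiE UNIV T)"
    using assms by (simp add: compactin_PiE)
  then show ?thesis by (simp add: euclidean_product_topology)
qed

lemma lin_on_diff:
  assumes L: "lin_on S L" and p: "p \<in> S" and q: "q \<in> S"
    and scale: "\<And>x c. x \<in> S \<Longrightarrow> (\<lambda>k. c * x k) \<in> S"
  shows "L (\<lambda>k. p k - q k) = (\<lambda>k. L p k - L q k)"
proof -
  have add: "\<forall>h\<in>S. \<forall>g\<in>S. L (\<lambda>k. h k + g k) = (\<lambda>k. L h k + L g k)"
    and hom: "\<forall>h\<in>S. \<forall>c. L (\<lambda>k. c * h k) = (\<lambda>k. c * L h k)"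
    using L unfolding lin_on_def by blast+
  show ?thesis
    using add[rule_format, OF p scale[OF q, of "- 1"]] hom[rule_format, OF q, of "- 1"] by simp
qed

lemma bij_betw_inv_into_self:
  assumes "bij_betw f S S" and "y \<in> S"
  shows "inv_into S f y \<in> S" and "f (inv_into S f y) = y"
  using bij_betw_apply[OF bij_betw_inv_into[OF assms(1)] assms(2)] bij_betw_inv_into_right[OF assms]
  by simp_all

lemma lin_on_inv_into:
  assumes L: "lin_on S L" and bij: "bij_betw L S S"
    and add: "\<And>x y. x \<in> S \<Longrightarrow> y \<in> S \<Longrightarrow> (\<lambda>k. x k + y k) \<in> S"
    and scale: "\<And>x c. x \<in> S \<Longrightarrow> (\<lambda>k. c * x k) \<in> S"
  shows "lin_on S (inv_into S L)"
proof -
  let ?B = "inv_into S L"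
  have B: "?B v \<in> S" "L (?B v) = v" if "v \<in> S" for v
    using bij_betw_inv_into_self[OF bij that] by simp_all
  have BL: "?B (L u) = u" if "u \<in> S" for u
    using bij that by (rule bij_betw_inv_into_left)
  have "?B (\<lambda>k. v k + v' k) = (\<lambda>k. ?B v k + ?B v' k)" if "v \<in> S" "v' \<in> S" for v v'
  proof -
    have "L (\<lambda>k. ?B v k + ?B v' k) = (\<lambda>k. v k + v' k)"
      using L B that unfolding lin_on_def by auto
    then show ?thesis using BL add B that by metis
  qed
  moreover have "?B (\<lambda>k. c * v k) = (\<lambda>k. c * ?B v k)" if "v \<in> S" for v c
  proof -
    have "L (\<lambda>k. c * ?B v k) = (\<lambda>k. c * v k)"
      using L B that unfolding lin_on_def by auto
    then show ?thesis using BL scale B that by metis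
  qed
  ultimately show ?thesis using B unfolding lin_on_def by blast
qed

lemma opnorm_le:
  assumes "\<And>h. h \<in> S \<Longrightarrow> n1 h \<le> 1 \<Longrightarrow> n2 (L h) \<le> e" and "z \<in> S" and "n1 z \<le> 1"
  shows "opnorm n1 n2 S L \<le> e"
  unfolding opnorm_def using assms by (intro cSup_least) auto

lemma has_deriv_on_inverse:
  assumes add: "\<And>x y. x \<in> S \<Longrightarrow> y \<in> S \<Longrightarrow> (\<lambda>k. x k + y k) \<in> S"
    and scale: "\<And>x c. x \<in> S \<Longrightarrow> (\<lambda>k. c * x k) \<in> S"
    and nx_uminus: "\<And>v. nx (\<lambda>k. - v k) = nx v"
    and deriv: "has_deriv_on nx ny S F L x" and w: "w \<in> S"
    and inverse: "\<And>v. v \<in> S \<Longrightarrow> H v \<in> S \<and> F (H v) = v" and Hw: "H w = x"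
    and lipschitz: "\<And>v. v \<in> S \<Longrightarrow> nx (\<lambda>k. H (\<lambda>j. w j + v j) k - x k) \<le> K * ny v"
    and M: "lin_on S M" "\<And>u. u \<in> S \<Longrightarrow> M (L u) = u" "\<And>v. v \<in> S \<Longrightarrow> nx (M v) \<le> C * ny v"
    and K: "0 < K" and C: "0 < C"
  shows "has_deriv_on ny nx S H M w"
  unfolding has_deriv_on_def
proof (intro conjI M(1) allI impI)
  have diff: "(\<lambda>k. p k - q k) \<in> S" if "p \<in> S" "q \<in> S" for p q
    using add[OF that(1) scale[OF that(2), of "- 1"]] by simp
  have x: "x \<in> S" "F x = w" using inverse[OF w] Hw by auto
  have L: "lin_on S L" using deriv unfolding has_deriv_on_def by blast
  fix e :: real assume "0 < e"
  define e1 where "e1 = e / (C * K)"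
  have e1: "0 < e1" using \<open>0 < e\<close> C K by (simp add: e1_def)
  obtain d where "0 < d" and d: "\<And>u. u \<in> S \<Longrightarrow> nx u < d \<Longrightarrow>
      ny (\<lambda>k. F (\<lambda>j. x j + u j) k - F x k - L u k) \<le> e1 * nx u"
    using deriv e1 unfolding has_deriv_on_def by blast
  show "\<exists>d>0. \<forall>h\<in>S. ny h < d \<longrightarrow> nx (\<lambda>k. H (\<lambda>j. w j + h j) k - H w k - M h k) \<le> e * ny h"
  proof (intro exI[of _ "d / K"] conjI ballI impI)
    fix h assume h: "h \<in> S" and small: "ny h < d / K"
    define y where "y = H (\<lambda>j. w j + h j)"
    define u where "u = (\<lambda>k. y k - x k)"
    have y: "y \<in> S" "F y = (\<lambda>j. w j + h j)" using inverse[OF add[OF w h]] by (auto simp: y_def)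
    have u: "u \<in> S" unfolding u_def using y(1) x(1) by (rule diff)
    have nu: "nx u \<le> K * ny h" using lipschitz[OF h] by (simp add: u_def y_def)
    have "nx u < d" using nu small K by (simp add: field_simps)
    then have rem: "ny (\<lambda>k. h k - L u k) \<le> e1 * nx u"
      using d[OF u] y(2) x(2) by (simp add: u_def)
    have Lu: "L u \<in> S" using L u unfolding lin_on_def by blast
    have "M (\<lambda>k. h k - L u k) = (\<lambda>k. M h k - u k)"
      using lin_on_diff[OF M(1) h Lu scale] M(2)[OF u] by simp
    then have "(\<lambda>k. H (\<lambda>j. w j + h j) k - H w k - M h k) = (\<lambda>k. - M (\<lambda>k. h k - L u k) k)"
      by (simp add: fun_eq_iff Hw u_def y_def)
    then have "nx (\<lambda>k. H (\<lambda>j. w j + h j) k - H w k - M h k) = nx (M (\<lambda>k. h k - L u k))"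
      by (simp add: nx_uminus)
    also have "\<dots> \<le> C * ny (\<lambda>k. h k - L u k)" using M(3) diff[OF h Lu] by blast
    also have "\<dots> \<le> C * (e1 * (K * ny h))"
      using rem nu C e1 by (intro mult_left_mono) (auto intro: order_trans)
    also have "\<dots> = e * ny h" using C K by (simp add: e1_def)
    finally show "nx (\<lambda>k. H (\<lambda>j. w j + h j) k - H w k - M h k) \<le> e * ny h" .
  qed (use \<open>0 < d\<close> K in simp)
qed

section \<open>The space E_N and its two norms\<close>

lemma EN_eq_0_outside: "x \<in> EN N \<Longrightarrow> k \<notin> {1..N-1} \<Longrightarrow> x k = 0"
  by (cases "k = 0") (auto simp: EN_def)

lemma EN_zero: "(\<lambda>k. 0) \<in> EN N"
  by (simp add: EN_def)

lemma EN_add: "x \<in> EN N \<Longrightarrow> y \<in> EN N \<Longrightarrow> (\<lambda>k. x k + y k) \<in> EN N"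
  by (simp add: EN_def)

lemma EN_diff: "x \<in> EN N \<Longrightarrow> y \<in> EN N \<Longrightarrow> (\<lambda>k. x k - y k) \<in> EN N"
  by (simp add: EN_def)

lemma EN_scale: "x \<in> EN N \<Longrightarrow> (\<lambda>k. c * x k) \<in> EN N"
  by (simp add: EN_def)

lemma delta2_add: "delta2 (\<lambda>k. x k + y k) k = delta2 x k + delta2 y k"
  by (simp add: delta2_def)

lemma delta2_diff: "delta2 (\<lambda>k. x k - y k) k = delta2 x k - delta2 y k"
  by (simp add: delta2_def)

lemma delta2_scale: "delta2 (\<lambda>k. c * x k) k = c * delta2 x k"
  by (simp add: delta2_def algebra_simps)

lemma normN_eq_L2_set: "normN N x = L2_set x {1..N-1}"
  by (simp add: normN_def L2_set_def)

lemma normEN_eq_L2_set: "normEN N x = L2_set (delta2 x) {1..N-1}"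
  by (simp add: normEN_def L2_set_def)

lemma normN_nonneg [simp]: "0 \<le> normN N x"
  by (simp add: normN_eq_L2_set)

lemma normEN_nonneg [simp]: "0 \<le> normEN N x"
  by (simp add: normEN_eq_L2_set)

lemma normN_zero [simp]: "normN N (\<lambda>k. 0) = 0"
  by (simp add: normN_def)

lemma normEN_zero [simp]: "normEN N (\<lambda>k. 0) = 0"
  by (simp add: normEN_def delta2_def)

lemma normN_power2: "(normN N x)\<^sup>2 = (\<Sum>k=1..N-1. (x k)\<^sup>2)"
  by (simp add: normN_def sum_nonneg)

lemma normN_triangle: "normN N (\<lambda>k. x k + y k) \<le> normN N x + normN N y"
  unfolding normN_eq_L2_set by (rule L2_set_triangle_ineq)

lemma normN_minus_commute: "normN N (\<lambda>k. x k - y k) = normN N (\<lambda>k. y k - x k)"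
  by (simp add: normN_def power2_commute)

lemma normEN_uminus: "normEN N (\<lambda>k. - x k) = normEN N x"
  by (simp add: normEN_def delta2_def algebra_simps power2_commute)

lemma abs_le_normN: "x \<in> EN N \<Longrightarrow> \<bar>x k\<bar> \<le> normN N x"
proof (cases "k \<in> {1..N-1}")
  case True
  then show ?thesis
    using member_le_L2_set[of "{1..N-1}" k "\<lambda>i. \<bar>x i\<bar>"] by (simp add: normN_def L2_set_def)
qed (simp add: EN_eq_0_outside)

lemma normN_eq_0_iff: "x \<in> EN N \<Longrightarrow> normN N x = 0 \<longleftrightarrow> x = (\<lambda>k. 0)"
  using abs_le_normN[of x N] by (auto simp: fun_eq_iff normN_def)

lemma sum_mult_le_normN: "(\<Sum>k=1..N-1. x k * y k) \<le> normN N x * normN N y"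
proof -
  have "(\<Sum>k=1..N-1. x k * y k) \<le> (\<Sum>k=1..N-1. \<bar>x k\<bar> * \<bar>y k\<bar>)"
    by (intro sum_mono) (simp flip: abs_mult)
  also have "\<dots> \<le> normN N x * normN N y"
    unfolding normN_eq_L2_set by (rule L2_set_mult_ineq)
  finally show ?thesis .
qed

lemma normN_le_mult_normN:
  assumes "\<And>k. k \<in> {1..N-1} \<Longrightarrow> \<bar>x k\<bar> \<le> c * \<bar>y k\<bar>" and "0 \<le> c"
  shows "normN N x \<le> c * normN N y"
proof -
  have "normN N x = L2_set (\<lambda>k. \<bar>x k\<bar>) {1..N-1}"
    by (simp add: normN_def L2_set_def)
  also have "\<dots> \<le> L2_set (\<lambda>k. c * \<bar>y k\<bar>) {1..N-1}"
    by (rule L2_set_mono) (use assms in auto)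
  also have "\<dots> = c * normN N y"
    using L2_set_right_distrib[OF \<open>0 \<le> c\<close>, of "\<lambda>k. \<bar>y k\<bar>"]
    by (simp add: normN_def L2_set_def)
  finally show ?thesis .
qed

lemma sum_delta2_by_parts:
  "x 0 = 0 \<Longrightarrow> (\<Sum>k=1..n. - delta2 x k * x k) =
     (\<Sum>i<n. (x (Suc i) - x i)\<^sup>2) + x n * (x n - x (Suc n))"
  by (induction n) (simp_all add: delta2_def power2_eq_square algebra_simps)

lemma discrete_poincare:
  assumes u: "u \<in> EN N"
  shows "(\<Sum>k=1..N-1. (u k)\<^sup>2) \<le> (real N)\<^sup>2 * (\<Sum>k=1..N-1. - delta2 u k * u k)"
proof (cases "N = 0")
  case False
  have u0: "u 0 = 0" and uN: "u N = 0" using u by (auto simp: EN_def)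
  define D where "D = (\<Sum>i<N-1. (u (Suc i) - u i)\<^sup>2)"
  have D: "0 \<le> D" by (simp add: D_def sum_nonneg)
  have energy: "(\<Sum>k=1..N-1. - delta2 u k * u k) = D + (u (N-1))\<^sup>2"
    using sum_delta2_by_parts[of u "N-1", OF u0] False uN
    by (simp add: D_def power2_eq_square)
  have pointwise: "(u k)\<^sup>2 \<le> real N * D" if k: "k \<in> {1..N-1}" for k
  proof -
    have "(u k)\<^sup>2 = (\<Sum>i<k. u (Suc i) - u i)\<^sup>2"
      by (simp add: sum_lessThan_telescope u0)
    also have "\<dots> \<le> (\<Sum>i<k. (u (Suc i) - u i)\<^sup>2) * real k"
      using sum_squared_le_sum_of_squares[of "\<lambda>i. u (Suc i) - u i" "{..<k}"] by simp
    also have "\<dots> \<le> D * real N"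
      using k unfolding D_def
      by (intro mult_mono sum_mono2) (auto simp: sum_nonneg)
    finally show ?thesis by (simp add: mult.commute)
  qed
  have "(\<Sum>k=1..N-1. (u k)\<^sup>2) \<le> real (N - 1) * (real N * D)"
    using sum_mono[of "{1..N-1}", OF pointwise] by simp
  also have "\<dots> \<le> (real N)\<^sup>2 * (D + (u (N-1))\<^sup>2)"
    using D False by (simp add: power2_eq_square algebra_simps mult_right_mono)
  finally show ?thesis by (simp only: energy)
qed simp

lemma normN_le_normEN:
  assumes u: "u \<in> EN N"
  shows "normN N u \<le> (real N)\<^sup>2 * normEN N u"
proof -
  have "normN N u * normN N u \<le> (real N)\<^sup>2 * (\<Sum>k=1..N-1. - delta2 u k * u k)"
    using discrete_poincare[OF u] by (simp add: normN_power2 flip: power2_eq_square)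
  also have "\<dots> \<le> (real N)\<^sup>2 * (normEN N u * normN N u)"
    using sum_mult_le_normN[where x = "\<lambda>k. - delta2 u k" and y = u]
    by (intro mult_left_mono) (simp_all add: normN_def normEN_def)
  finally have "normN N u * normN N u \<le> ((real N)\<^sup>2 * normEN N u) * normN N u"
    by (simp add: algebra_simps)
  then show ?thesis
    using normN_nonneg[of N u] by (cases "normN N u = 0") auto
qed

lemma normEN_le_normN:
  assumes u: "u \<in> EN N"
  shows "normEN N u \<le> 4 * real N * normN N u"
proof -
  have pointwise: "\<bar>delta2 u k\<bar> \<le> 4 * normN N u" for k
    using abs_le_normN[OF u, of "Suc k"] abs_le_normN[OF u, of k] abs_le_normN[OF u, of "k - 1"]
    by (simp add: delta2_def)
  have "normEN N u \<le> (\<Sum>k=1..N-1. \<bar>delta2 u k\<bar>)"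
    unfolding normEN_eq_L2_set by (rule L2_set_le_sum_abs)
  also have "\<dots> \<le> real (N - 1) * (4 * normN N u)"
    using sum_mono[of "{1..N-1}", OF pointwise] by simp
  also have "\<dots> \<le> 4 * real N * normN N u"
    by (simp add: mult_right_mono)
  finally show ?thesis .
qed

lemma discrete_energy_lower_bound:
  assumes h: "h \<in> EN N" and q: "\<And>k. k \<in> {1..N-1} \<Longrightarrow> m * (h k)\<^sup>2 \<le> q k"
  shows "(1 + m) / (real N)\<^sup>2 * (normN N h)\<^sup>2 \<le>
           (\<Sum>k=1..N-1. - delta2 h k * h k + q k / (real N)\<^sup>2)"
proof -
  have "(normN N h)\<^sup>2 / (real N)\<^sup>2 \<le> (\<Sum>k=1..N-1. - delta2 h k * h k)"
    using discrete_poincare[OF h]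
    by (cases "N = 0") (simp_all add: normN_power2 divide_le_eq mult.commute)
  moreover have "m * (normN N h)\<^sup>2 / (real N)\<^sup>2 \<le> (\<Sum>k=1..N-1. q k / (real N)\<^sup>2)"
    using sum_mono[of "{1..N-1}", OF q]
    by (simp add: normN_power2 sum_distrib_left divide_right_mono flip: sum_divide_distrib)
  ultimately have "(normN N h)\<^sup>2 / (real N)\<^sup>2 + m * (normN N h)\<^sup>2 / (real N)\<^sup>2 \<le>
      (\<Sum>k=1..N-1. - delta2 h k * h k) + (\<Sum>k=1..N-1. q k / (real N)\<^sup>2)"
    by linarith
  also have "\<dots> = (\<Sum>k=1..N-1. - delta2 h k * h k + q k / (real N)\<^sup>2)"
    by (rule sum.distrib[symmetric])
  finally show ?thesis
    by (simp add: add_divide_distrib ring_distribs)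
qed

lemma EN_attains_min:
  fixes \<Phi> :: "(nat \<Rightarrow> real) \<Rightarrow> real"
  assumes cont: "continuous_on (EN N) \<Phi>" and z: "z \<in> EN N"
    and coercive: "\<And>y. y \<in> EN N \<Longrightarrow> R \<le> normN N y \<Longrightarrow> \<Phi> z < \<Phi> y"
  shows "\<exists>x\<in>EN N. \<forall>y\<in>EN N. \<Phi> x \<le> \<Phi> y"
proof -
  define K where "K = PiE UNIV (\<lambda>i. if i \<in> {1..N-1} then {-R..R} else {0})"
  have K: "compact K" unfolding K_def by (rule compact_PiE_UNIV) simp
  have KEN: "K \<subseteq> EN N"
  proof
    fix x assume "x \<in> K"
    then have "x k \<in> (if k \<in> {1..N-1} then {-R..R} else {0})" for k
      by (simp add: K_def PiE_iff)
    then have x0: "x k = 0" if "k \<notin> {1..N-1}" for k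
      using that by (metis singletonD)
    have "k \<notin> {1..N-1}" if "k = 0 \<or> N \<le> k" for k
      using that by auto
    then show "x \<in> EN N" unfolding EN_def using x0 by blast
  qed
  have outside: "R \<le> normN N y" if y: "y \<in> EN N" and "y \<notin> K" for y
  proof -
    obtain i where i: "y i \<notin> (if i \<in> {1..N-1} then {-R..R} else {0})"
      using \<open>y \<notin> K\<close> by (auto simp: K_def PiE_iff)
    then have "i \<in> {1..N-1}" using EN_eq_0_outside[OF y, of i] by (metis singletonI)
    then have "R < \<bar>y i\<bar>" using i by auto
    then show ?thesis using abs_le_normN[OF y, of i] by linarith
  qed
  have "z \<in> K" using outside[OF z] coercive[OF z] by blast
  then obtain x where x: "x \<in> K" "\<forall>y\<in>K. \<Phi> x \<le> \<Phi> y"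
    using continuous_attains_inf[OF K _ continuous_on_subset[OF cont KEN]] by blast
  have "\<Phi> x \<le> \<Phi> y" if y: "y \<in> EN N" for y
    using x coercive[OF y] outside[OF y] \<open>z \<in> K\<close> by (cases "y \<in> K") force+
  then show ?thesis using x KEN by blast
qed

section \<open>The operator is a bijection\<close>

definition Dop :: "nat \<Rightarrow> (nat \<Rightarrow> real \<Rightarrow> real) \<Rightarrow> (nat \<Rightarrow> real) \<Rightarrow> (nat \<Rightarrow> real)" where
  "Dop N g x = (\<lambda>k. if 1 \<le> k \<and> k \<le> N - 1 then delta2 x k - g k (x k) / (real N)\<^sup>2 else 0)"

abbreviation Dlin :: "nat \<Rightarrow> (nat \<Rightarrow> real) \<Rightarrow> (nat \<Rightarrow> real) \<Rightarrow> (nat \<Rightarrow> real)" where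
  "Dlin N a \<equiv> Dop N (\<lambda>k s. a k * s)"

lemma DN_eq_Dop: "DN N f = Dop N (\<lambda>k. f (real k / real N))"
  by (simp add: DN_def Dop_def fun_eq_iff)

lemma Dop_in_EN: "Dop N g x \<in> EN N"
  by (auto simp: EN_def Dop_def)

lemma Dop_outside: "k \<notin> {1..N-1} \<Longrightarrow> Dop N g x k = 0"
  by (auto simp: Dop_def)

lemma Dop_strongly_monotone:
  assumes x: "x \<in> EN N" and y: "y \<in> EN N"
    and mono: "\<And>k. k \<in> {1..N-1} \<Longrightarrow> m * (x k - y k)\<^sup>2 \<le> (g k (x k) - g k (y k)) * (x k - y k)"
  shows "(1 + m) / (real N)\<^sup>2 * normN N (\<lambda>k. x k - y k) \<le> normN N (\<lambda>k. Dop N g x k - Dop N g y k)"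
proof -
  define h where "h = (\<lambda>k. x k - y k)"
  define r where "r = (\<lambda>k. Dop N g x k - Dop N g y k)"
  have "(1 + m) / (real N)\<^sup>2 * (normN N h)\<^sup>2 \<le>
      (\<Sum>k=1..N-1. - delta2 h k * h k + (g k (x k) - g k (y k)) * h k / (real N)\<^sup>2)"
    by (rule discrete_energy_lower_bound) (use x y mono in \<open>simp_all add: h_def EN_diff\<close>)
  also have "\<dots> = (\<Sum>k=1..N-1. (- r k) * h k)"
    by (intro sum.cong) (auto simp: r_def h_def Dop_def delta2_diff field_simps)
  also have "\<dots> \<le> normN N r * normN N h"
    using sum_mult_le_normN[where x = "\<lambda>k. - r k" and y = h] by (simp add: normN_def)
  finally have energy: "((1 + m) / (real N)\<^sup>2 * normN N h) * normN N h \<le> normN N r * normN N h"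
    by (simp add: power2_eq_square algebra_simps)
  then have "(1 + m) / (real N)\<^sup>2 * normN N h \<le> normN N r"
  proof (cases "normN N h = 0")
    case False
    then have "0 < normN N h" using normN_nonneg[of N h] by linarith
    then show ?thesis by (rule mult_right_le_imp_le[OF energy])
  qed simp
  then show ?thesis by (simp add: h_def r_def)
qed

lemma normN_Dop_diff_ge:
  assumes x: "x \<in> EN N" and y: "y \<in> EN N"
    and der: "\<And>k s. k \<in> {1..N-1} \<Longrightarrow> (g k has_real_derivative g' k s) (at s)"
    and lower: "\<And>k s. k \<in> {1..N-1} \<Longrightarrow> m \<le> g' k s"
  shows "(1 + m) / (real N)\<^sup>2 * normN N (\<lambda>k. x k - y k) \<le> normN N (\<lambda>k. Dop N g x k - Dop N g y k)"
  by (rule Dop_strongly_monotone[OF x y deriv_ge_imp_monotone_increment[OF der lower]])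

lemma continuous_on_Dop_coordinate:
  assumes "\<And>k. k \<in> {1..N-1} \<Longrightarrow> continuous_on UNIV (g k)"
  shows "continuous_on S (\<lambda>x. Dop N g x k)"
proof (cases "k \<in> {1..N-1}")
  case True
  have "continuous_on S (\<lambda>x. delta2 x k - g k (x k) / (real N)\<^sup>2)"
    unfolding delta2_def
    by (intro continuous_intros continuous_on_compose2[OF assms[OF True]]
          continuous_on_subset[OF continuous_on_product_coordinates]) (use True in auto)
  then show ?thesis using True by (simp add: Dop_def)
next
  case False
  then show ?thesis by (simp add: Dop_outside)
qed

lemma Dop_line_derivative:
  assumes "k \<in> {1..N-1} \<Longrightarrow> (g k has_real_derivative g' k (x k)) (at (x k))"
  shows "((\<lambda>s. Dop N g (\<lambda>j. x j + s * r j) k) has_real_derivative Dlin N (\<lambda>j. g' j (x j)) r k) (at 0)"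
proof (cases "k \<in> {1..N-1}")
  case True
  have outer: "(g k has_real_derivative g' k (x k)) (at (x k + 0 * r k))"
    using assms True by simp
  have inner: "((\<lambda>s. x k + s * r k) has_real_derivative r k) (at 0)"
    by (auto intro!: derivative_eq_intros)
  have linear_part: "((\<lambda>s. delta2 x k + s * delta2 r k) has_real_derivative delta2 r k) (at 0)"
    by (auto intro!: derivative_eq_intros)
  have "((\<lambda>s. delta2 x k + s * delta2 r k - g k (x k + s * r k) / (real N)\<^sup>2)
      has_real_derivative delta2 r k - g' k (x k) * r k / (real N)\<^sup>2) (at 0)"
    using DERIV_diff[OF linear_part DERIV_cdivide[OF DERIV_chain2[OF outer inner]]] by simp
  then show ?thesis
    using True by (simp add: Dop_def delta2_add delta2_scale)
next
  case False
  then show ?thesis by (simp add: Dop_outside)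
qed

lemma Dop_residual_minimizer_solves:
  assumes N: "1 \<le> N" and m: "-1 < m" and x: "x \<in> EN N" and w: "w \<in> EN N"
    and der: "\<And>k. k \<in> {1..N-1} \<Longrightarrow> (g k has_real_derivative g' k (x k)) (at (x k))"
    and lower: "\<And>k. k \<in> {1..N-1} \<Longrightarrow> m \<le> g' k (x k)"
    and min: "\<And>y. y \<in> EN N \<Longrightarrow> normN N (\<lambda>k. Dop N g x k - w k) \<le> normN N (\<lambda>k. Dop N g y k - w k)"
  shows "Dop N g x = w"
proof -
  define r where "r = (\<lambda>k. Dop N g x k - w k)"
  define a where "a = (\<lambda>k. g' k (x k))"
  define \<psi> where "\<psi> s = (\<Sum>k=1..N-1. (Dop N g (\<lambda>j. x j + s * r j) k - w k)\<^sup>2)" for s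
  define D where "D = (\<Sum>k=1..N-1. 2 * r k * Dlin N a r k)"
  have r: "r \<in> EN N" unfolding r_def using Dop_in_EN w by (rule EN_diff)
  have "(\<psi> has_real_derivative D) (at 0)"
    unfolding \<psi>_def D_def
    by (intro DERIV_sum) (auto simp: r_def a_def intro!: derivative_eq_intros Dop_line_derivative der)
  moreover have "\<psi> 0 \<le> \<psi> s" for s
  proof -
    have "(\<lambda>j. x j + s * r j) \<in> EN N" using x r by (intro EN_add EN_scale)
    then have "(normN N r)\<^sup>2 \<le> (normN N (\<lambda>k. Dop N g (\<lambda>j. x j + s * r j) k - w k))\<^sup>2"
      using min unfolding r_def by (intro power_mono) auto
    then show ?thesis by (simp add: \<psi>_def normN_power2 r_def)
  qed
  ultimately have "D = 0" by (intro DERIV_local_min[of \<psi> D 0 1]) auto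
  have "(1 + m) / (real N)\<^sup>2 * (normN N r)\<^sup>2 \<le>
      (\<Sum>k=1..N-1. - delta2 r k * r k + a k * (r k)\<^sup>2 / (real N)\<^sup>2)"
    using lower by (intro discrete_energy_lower_bound[OF r]) (simp add: a_def mult_right_mono)
  also have "\<dots> = (\<Sum>k=1..N-1. - (2 * r k * Dlin N a r k) / 2)"
    by (intro sum.cong) (auto simp: Dop_def power2_eq_square field_simps)
  also have "\<dots> = - D / 2"
    by (simp add: D_def sum_negf sum_divide_distrib)
  finally have "(1 + m) / (real N)\<^sup>2 * (normN N r)\<^sup>2 \<le> 0"
    using \<open>D = 0\<close> by simp
  moreover have "0 < (1 + m) / (real N)\<^sup>2" using m N by simp
  ultimately have "(normN N r)\<^sup>2 \<le> 0" by (metis mult_le_cancel_left_pos mult_zero_right)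
  then have "r = (\<lambda>k. 0)" using normN_eq_0_iff[OF r] by simp
  then show ?thesis by (simp add: r_def fun_eq_iff)
qed

lemma Dop_surjective:
  assumes N: "1 \<le> N" and m: "-1 < m" and w: "w \<in> EN N"
    and der: "\<And>k s. k \<in> {1..N-1} \<Longrightarrow> (g k has_real_derivative g' k s) (at s)"
    and lower: "\<And>k s. k \<in> {1..N-1} \<Longrightarrow> m \<le> g' k s"
  shows "\<exists>x\<in>EN N. Dop N g x = w"
proof -
  define c where "c = (1 + m) / (real N)\<^sup>2"
  define \<Phi> where "\<Phi> y = normN N (\<lambda>k. Dop N g y k - w k)" for y
  define b where "b = \<Phi> (\<lambda>k. 0)"
  have c: "0 < c" using m N by (simp add: c_def)
  have "continuous_on (EN N) (\<lambda>y. sqrt (\<Sum>k=1..N-1. (Dop N g y k - w k)\<^sup>2))"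
    using der by (intro continuous_intros continuous_on_Dop_coordinate)
      (metis DERIV_isCont continuous_at_imp_continuous_on)
  then have "continuous_on (EN N) \<Phi>" by (simp add: \<Phi>_def normN_def)
  moreover have "\<Phi> (\<lambda>k. 0) < \<Phi> y" if y: "y \<in> EN N" and "(2 * b + 1) / c \<le> normN N y" for y
  proof -
    have "2 * b + 1 \<le> c * normN N y" using that c by (simp add: field_simps)
    also have "\<dots> \<le> normN N (\<lambda>k. Dop N g y k - Dop N g (\<lambda>k. 0) k)"
      using normN_Dop_diff_ge[where g = g and g' = g', OF y EN_zero der lower] by (simp add: c_def)
    also have "\<dots> \<le> \<Phi> y + b"
      using normN_triangle[of N "\<lambda>k. Dop N g y k - w k" "\<lambda>k. w k - Dop N g (\<lambda>k. 0) k"]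
      by (simp add: \<Phi>_def b_def normN_minus_commute[of N w])
    finally show ?thesis using normN_nonneg[of N] by (simp add: b_def \<Phi>_def)
  qed
  ultimately obtain x where x: "x \<in> EN N" and min: "\<And>y. y \<in> EN N \<Longrightarrow> \<Phi> x \<le> \<Phi> y"
    using EN_attains_min[OF _ EN_zero] by blast
  have "Dop N g x = w"
    using min unfolding \<Phi>_def by (intro Dop_residual_minimizer_solves[where g' = g', OF N m x w]) (use der lower in auto)
  then show ?thesis using x by blast
qed

lemma bij_betw_Dop:
  assumes N: "1 \<le> N" and m: "-1 < m"
    and der: "\<And>k s. k \<in> {1..N-1} \<Longrightarrow> (g k has_real_derivative g' k s) (at s)"
    and lower: "\<And>k s. k \<in> {1..N-1} \<Longrightarrow> m \<le> g' k s"
  shows "bij_betw (Dop N g) (EN N) (EN N)"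
proof (rule bij_betw_imageI)
  show "inj_on (Dop N g) (EN N)"
  proof (rule inj_onI)
    fix x y assume x: "x \<in> EN N" and y: "y \<in> EN N" and eq: "Dop N g x = Dop N g y"
    have "(1 + m) / (real N)\<^sup>2 * normN N (\<lambda>k. x k - y k) \<le> 0"
      using normN_Dop_diff_ge[where g = g and g' = g', OF x y der lower] eq by simp
    moreover have "0 < (1 + m) / (real N)\<^sup>2" using m N by simp
    ultimately have "normN N (\<lambda>k. x k - y k) \<le> 0"
      by (metis mult_le_cancel_left_pos mult_zero_right)
    then have "normN N (\<lambda>k. x k - y k) = 0"
      using normN_nonneg[of N "\<lambda>k. x k - y k"] by linarith
    then show "x = y" using normN_eq_0_iff[OF EN_diff[OF x y]] by (simp add: fun_eq_iff)
  qed
  show "Dop N g ` EN N = EN N"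
    using Dop_in_EN Dop_surjective[where g = g and g' = g', OF N m _ der lower] by blast
qed

lemma normN_inv_into_Dop_diff_le:
  assumes N: "1 \<le> N" and m: "-1 < m" and v: "v \<in> EN N" and w: "w \<in> EN N"
    and der: "\<And>k s. k \<in> {1..N-1} \<Longrightarrow> (g k has_real_derivative g' k s) (at s)"
    and lower: "\<And>k s. k \<in> {1..N-1} \<Longrightarrow> m \<le> g' k s"
  shows "(1 + m) / (real N)\<^sup>2 * normN N (\<lambda>k. inv_into (EN N) (Dop N g) v k - inv_into (EN N) (Dop N g) w k)
           \<le> normN N (\<lambda>k. v k - w k)"
proof -
  have bij: "bij_betw (Dop N g) (EN N) (EN N)" by (rule bij_betw_Dop[where g' = g', OF N m der lower])
  show ?thesis
    using normN_Dop_diff_ge[where g' = g', OF bij_betw_inv_into_self(1)[OF bij v]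
        bij_betw_inv_into_self(1)[OF bij w] der lower]
    by (simp add: bij_betw_inv_into_self(2)[OF bij v] bij_betw_inv_into_self(2)[OF bij w])
qed

lemma normEN_inv_into_Dop_diff_le:
  assumes N: "1 \<le> N" and m: "-1 < m" and v: "v \<in> EN N" and w: "w \<in> EN N"
    and der: "\<And>k s. k \<in> {1..N-1} \<Longrightarrow> (g k has_real_derivative g' k s) (at s)"
    and lower: "\<And>k s. k \<in> {1..N-1} \<Longrightarrow> m \<le> g' k s"
  shows "normEN N (\<lambda>k. inv_into (EN N) (Dop N g) v k - inv_into (EN N) (Dop N g) w k)
           \<le> 4 * real N / ((1 + m) / (real N)\<^sup>2) * normN N (\<lambda>k. v k - w k)"
proof -
  define c where "c = (1 + m) / (real N)\<^sup>2"
  define u where "u = (\<lambda>k. inv_into (EN N) (Dop N g) v k - inv_into (EN N) (Dop N g) w k)"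
  have c: "0 < c" using m N by (simp add: c_def)
  have bij: "bij_betw (Dop N g) (EN N) (EN N)" by (rule bij_betw_Dop[where g' = g', OF N m der lower])
  have u: "u \<in> EN N"
    unfolding u_def by (intro EN_diff bij_betw_inv_into_self(1)[OF bij] v w)
  have "c * normN N u \<le> normN N (\<lambda>k. v k - w k)"
    unfolding u_def c_def by (rule normN_inv_into_Dop_diff_le[where g' = g', OF N m v w der lower])
  then have "4 * real N * normN N u \<le> 4 * real N / c * normN N (\<lambda>k. v k - w k)"
    using c N by (simp add: field_simps)
  then show ?thesis
    using normEN_le_normN[OF u] by (simp add: u_def c_def)
qed

section \<open>Differentiability of the operator\<close>

lemma lin_on_Dlin: "lin_on (EN N) (Dlin N a)"
  unfolding lin_on_def
  by (intro conjI ballI allI Dop_in_EN)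
     (auto simp: Dop_def fun_eq_iff delta2_add delta2_scale algebra_simps add_divide_distrib)

lemma abs_Dop_remainder_le:
  assumes "1 \<le> N"
  shows "\<bar>Dop N g (\<lambda>j. x j + h j) k - Dop N g x k - Dlin N a h k\<bar> \<le>
           \<bar>g k (x k + h k) - g k (x k) - a k * h k\<bar>"
proof (cases "k \<in> {1..N-1}")
  case True
  have "Dop N g (\<lambda>j. x j + h j) k - Dop N g x k - Dlin N a h k =
      - (g k (x k + h k) - g k (x k) - a k * h k) / (real N)\<^sup>2"
    using True assms by (simp add: Dop_def delta2_add field_simps)
  then have "\<bar>Dop N g (\<lambda>j. x j + h j) k - Dop N g x k - Dlin N a h k\<bar> =
      \<bar>g k (x k + h k) - g k (x k) - a k * h k\<bar> / (real N)\<^sup>2"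
    by (simp add: abs_divide abs_minus_commute)
  also have "\<dots> \<le> \<bar>g k (x k + h k) - g k (x k) - a k * h k\<bar>"
    using divide_left_mono[of 1 "(real N)\<^sup>2" "\<bar>g k (x k + h k) - g k (x k) - a k * h k\<bar>"] assms
    by simp
  finally show ?thesis .
qed (simp add: Dop_outside)

lemma abs_Dlin_diff_le:
  assumes "1 \<le> N"
  shows "\<bar>Dlin N a h k - Dlin N b h k\<bar> \<le> \<bar>a k - b k\<bar> * \<bar>h k\<bar>"
proof (cases "k \<in> {1..N-1}")
  case True
  have "Dlin N a h k - Dlin N b h k = - ((a k - b k) * h k) / (real N)\<^sup>2"
    using True assms by (simp add: Dop_def field_simps)
  then have "\<bar>Dlin N a h k - Dlin N b h k\<bar> = \<bar>a k - b k\<bar> * \<bar>h k\<bar> / (real N)\<^sup>2"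
    by (simp add: abs_mult)
  also have "\<dots> \<le> \<bar>a k - b k\<bar> * \<bar>h k\<bar>"
    using divide_left_mono[of 1 "(real N)\<^sup>2" "\<bar>a k - b k\<bar> * \<bar>h k\<bar>"] assms by simp
  finally show ?thesis .
qed (simp add: Dop_outside)

lemma normN_Dlin_diff_le:
  assumes N: "1 \<le> N" and close: "\<And>k. k \<in> {1..N-1} \<Longrightarrow> \<bar>a k - b k\<bar> \<le> e" and "0 \<le> e"
  shows "normN N (\<lambda>k. Dlin N a h k - Dlin N b h k) \<le> e * normN N h"
proof (rule normN_le_mult_normN[OF _ \<open>0 \<le> e\<close>])
  fix k assume "k \<in> {1..N-1}"
  then show "\<bar>Dlin N a h k - Dlin N b h k\<bar> \<le> e * \<bar>h k\<bar>"
    using abs_Dlin_diff_le[OF N, of a h k b] mult_right_mono[OF close abs_ge_zero, of k "h k"]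
    by linarith
qed

lemma has_deriv_on_Dop:
  assumes N: "1 \<le> N" and x: "x \<in> EN N"
    and der: "\<And>k. k \<in> {1..N-1} \<Longrightarrow> (g k has_real_derivative g' k (x k)) (at (x k))"
  shows "has_deriv_on (normEN N) (normN N) (EN N) (Dop N g) (Dlin N (\<lambda>k. g' k (x k))) x"
  unfolding has_deriv_on_def
proof (intro conjI lin_on_Dlin allI impI)
  fix e :: real assume "0 < e"
  define e1 where "e1 = e / (real N)\<^sup>2"
  have e1: "0 < e1" using \<open>0 < e\<close> N by (simp add: e1_def)
  have "\<exists>d>0. \<forall>u. \<bar>u\<bar> < d \<longrightarrow> \<bar>g k (x k + u) - g k (x k) - g' k (x k) * u\<bar> \<le> e1 * \<bar>u\<bar>"
    if "k \<in> {1..N-1}" for k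
    using real_derivative_eps_delta[OF der[OF that] e1] .
  then obtain d where d: "0 < d" and
    approx: "\<And>k u. k \<in> {1..N-1} \<Longrightarrow> \<bar>u\<bar> < d \<Longrightarrow>
       \<bar>g k (x k + u) - g k (x k) - g' k (x k) * u\<bar> \<le> e1 * \<bar>u\<bar>"
    using uniform_delta_finite[of "{1..N-1}"
        "\<lambda>k u. \<bar>g k (x k + u) - g k (x k) - g' k (x k) * u\<bar> \<le> e1 * \<bar>u\<bar>"] by auto
  show "\<exists>d>0. \<forall>h\<in>EN N. normEN N h < d \<longrightarrow>
      normN N (\<lambda>k. Dop N g (\<lambda>j. x j + h j) k - Dop N g x k - Dlin N (\<lambda>k. g' k (x k)) h k)
        \<le> e * normEN N h"
  proof (intro exI[of _ "d / (real N)\<^sup>2"] conjI ballI impI)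
    fix h assume h: "h \<in> EN N" and small: "normEN N h < d / (real N)\<^sup>2"
    have "normN N h < d"
      using normN_le_normEN[OF h] small N by (simp add: field_simps)
    then have "\<bar>h k\<bar> < d" for k using abs_le_normN[OF h, of k] by linarith
    then have "\<bar>Dop N g (\<lambda>j. x j + h j) k - Dop N g x k - Dlin N (\<lambda>k. g' k (x k)) h k\<bar>
        \<le> e1 * \<bar>h k\<bar>" if "k \<in> {1..N-1}" for k
      using abs_Dop_remainder_le[OF N, where a = "\<lambda>k. g' k (x k)"] approx[OF that] by (meson order_trans)
    then have "normN N (\<lambda>k. Dop N g (\<lambda>j. x j + h j) k - Dop N g x k - Dlin N (\<lambda>k. g' k (x k)) h k)
        \<le> e1 * normN N h"
      using e1 by (intro normN_le_mult_normN) auto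
    also have "\<dots> \<le> e1 * ((real N)\<^sup>2 * normEN N h)"
      using normN_le_normEN[OF h] e1 by (intro mult_left_mono) auto
    also have "\<dots> = e * normEN N h" using N by (simp add: e1_def)
    finally show "normN N (\<lambda>k. Dop N g (\<lambda>j. x j + h j) k - Dop N g x k - Dlin N (\<lambda>k. g' k (x k)) h k)
        \<le> e * normEN N h" .
  qed (use d N in simp)
qed

lemma coefficients_close:
  fixes e :: real
  assumes cont: "\<And>k. k \<in> {1..N-1} \<Longrightarrow> continuous_on UNIV (a k)"
    and x: "x \<in> EN N" and e: "0 < e"
  shows "\<exists>d>0. \<forall>y\<in>EN N. normN N (\<lambda>k. y k - x k) < d \<longrightarrow>
           (\<forall>k\<in>{1..N-1}. \<bar>a k (y k) - a k (x k)\<bar> \<le> e)"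
proof -
  have "\<exists>d>0. \<forall>u. \<bar>u\<bar> < d \<longrightarrow> \<bar>a k (x k + u) - a k (x k)\<bar> \<le> e" if "k \<in> {1..N-1}" for k
    using continuous_eps_delta[OF cont[OF that] e] .
  then obtain d where "0 < d" and
    close: "\<And>k u. k \<in> {1..N-1} \<Longrightarrow> \<bar>u\<bar> < d \<Longrightarrow> \<bar>a k (x k + u) - a k (x k)\<bar> \<le> e"
    using uniform_delta_finite[of "{1..N-1}" "\<lambda>k u. \<bar>a k (x k + u) - a k (x k)\<bar> \<le> e"] by auto
  have "\<bar>a k (y k) - a k (x k)\<bar> \<le> e"
    if "y \<in> EN N" "normN N (\<lambda>k. y k - x k) < d" "k \<in> {1..N-1}" for y k
    using close[OF that(3), of "y k - x k"] abs_le_normN[OF EN_diff[OF that(1) x], of k] that(2)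
    by simp
  then show ?thesis using \<open>0 < d\<close> by blast
qed

lemma Dop_derivative_continuous:
  assumes N: "1 \<le> N" and cont: "\<And>k. k \<in> {1..N-1} \<Longrightarrow> continuous_on UNIV (g' k)"
    and x: "x \<in> EN N" and e: "0 < e"
  shows "\<exists>d>0. \<forall>y\<in>EN N. normEN N (\<lambda>k. y k - x k) < d \<longrightarrow>
           opnorm (normEN N) (normN N) (EN N)
             (\<lambda>h k. Dlin N (\<lambda>k. g' k (y k)) h k - Dlin N (\<lambda>k. g' k (x k)) h k) \<le> e"
proof -
  define e1 where "e1 = e / (real N)\<^sup>2"
  have e1: "0 < e1" using e N by (simp add: e1_def)
  obtain d where d: "0 < d" and close: "\<And>y k. y \<in> EN N \<Longrightarrow> normN N (\<lambda>k. y k - x k) < d \<Longrightarrow>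
      k \<in> {1..N-1} \<Longrightarrow> \<bar>g' k (y k) - g' k (x k)\<bar> \<le> e1"
    using coefficients_close[where a = g', OF cont x e1] by blast
  show ?thesis
  proof (intro exI[of _ "d / (real N)\<^sup>2"] conjI ballI impI)
    fix y assume y: "y \<in> EN N" and small: "normEN N (\<lambda>k. y k - x k) < d / (real N)\<^sup>2"
    have "normN N (\<lambda>k. y k - x k) < d"
      using normN_le_normEN[OF EN_diff[OF y x]] small N by (simp add: field_simps)
    note close = close[OF y this]
    show "opnorm (normEN N) (normN N) (EN N)
        (\<lambda>h k. Dlin N (\<lambda>k. g' k (y k)) h k - Dlin N (\<lambda>k. g' k (x k)) h k) \<le> e"
    proof (rule opnorm_le[OF _ EN_zero])
      fix h assume h: "h \<in> EN N" and "normEN N h \<le> 1"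
      have "normN N (\<lambda>k. Dlin N (\<lambda>k. g' k (y k)) h k - Dlin N (\<lambda>k. g' k (x k)) h k) \<le> e1 * normN N h"
        using close e1 by (intro normN_Dlin_diff_le[OF N]) auto
      also have "\<dots> \<le> e1 * ((real N)\<^sup>2 * 1)"
        using normN_le_normEN[OF h] \<open>normEN N h \<le> 1\<close> e1 N
        by (intro mult_left_mono) (auto intro: order_trans)
      also have "\<dots> = e" using N by (simp add: e1_def)
      finally show "normN N (\<lambda>k. Dlin N (\<lambda>k. g' k (y k)) h k - Dlin N (\<lambda>k. g' k (x k)) h k) \<le> e" .
    qed simp
  qed (use d N in simp)
qed

lemma C1_on_Dop:
  assumes N: "1 \<le> N"
    and der: "\<And>k s. k \<in> {1..N-1} \<Longrightarrow> (g k has_real_derivative g' k s) (at s)"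
    and cont: "\<And>k. k \<in> {1..N-1} \<Longrightarrow> continuous_on UNIV (g' k)"
  shows "C1_on (normEN N) (normN N) (EN N) (Dop N g)"
  unfolding C1_on_def
proof (intro exI[of _ "\<lambda>x. Dlin N (\<lambda>k. g' k (x k))"] conjI ballI allI impI)
  fix x assume x: "x \<in> EN N"
  show "has_deriv_on (normEN N) (normN N) (EN N) (Dop N g) (Dlin N (\<lambda>k. g' k (x k))) x"
    by (rule has_deriv_on_Dop[where g = g and g' = g', OF N x der])
  fix e :: real assume "0 < e"
  show "\<exists>d>0. \<forall>y\<in>EN N. normEN N (\<lambda>k. y k - x k) < d \<longrightarrow>
      opnorm (normEN N) (normN N) (EN N)
        (\<lambda>h k. Dlin N (\<lambda>k. g' k (y k)) h k - Dlin N (\<lambda>k. g' k (x k)) h k) \<le> e"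
    by (rule Dop_derivative_continuous[OF N cont x \<open>0 < e\<close>])
qed

section \<open>Differentiability of the inverse\<close>

lemma bij_betw_Dlin:
  assumes N: "1 \<le> N" and m: "-1 < m" and a: "\<And>k. k \<in> {1..N-1} \<Longrightarrow> m \<le> a k"
  shows "bij_betw (Dlin N a) (EN N) (EN N)"
  by (rule bij_betw_Dop[where g' = "\<lambda>k s. a k", OF N m]) (auto intro!: derivative_eq_intros a)

lemma normN_Dlin_ge:
  assumes h: "h \<in> EN N" and a: "\<And>k. k \<in> {1..N-1} \<Longrightarrow> m \<le> a k"
  shows "(1 + m) / (real N)\<^sup>2 * normN N h \<le> normN N (Dlin N a h)"
proof -
  have der: "((\<lambda>s. a k * s) has_real_derivative a k) (at s)" if "k \<in> {1..N-1}" for k s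
    by (auto intro!: derivative_eq_intros)
  have "Dlin N a (\<lambda>k. 0) = (\<lambda>k. 0)" by (simp add: Dop_def delta2_def fun_eq_iff)
  then show ?thesis
    using normN_Dop_diff_ge[where g = "\<lambda>k s. a k * s" and g' = "\<lambda>k s. a k", OF h EN_zero der a]
    by simp
qed

lemma normEN_inv_into_Dlin_le:
  assumes N: "1 \<le> N" and m: "-1 < m" and a: "\<And>k. k \<in> {1..N-1} \<Longrightarrow> m \<le> a k"
    and v: "v \<in> EN N"
  shows "normEN N (inv_into (EN N) (Dlin N a) v) \<le> 4 * real N / ((1 + m) / (real N)\<^sup>2) * normN N v"
proof -
  define c where "c = (1 + m) / (real N)\<^sup>2"
  define u where "u = inv_into (EN N) (Dlin N a) v"
  have c: "0 < c" using m N by (simp add: c_def)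
  have bij: "bij_betw (Dlin N a) (EN N) (EN N)" by (rule bij_betw_Dlin[OF N m a])
  have u: "u \<in> EN N" "Dlin N a u = v"
    using bij_betw_inv_into_self[OF bij v] by (simp_all add: u_def)
  have "c * normN N u \<le> normN N v"
    using normN_Dlin_ge[where a = a, OF u(1) a] u(2) by (simp add: c_def)
  then have nu: "normN N u \<le> normN N v / c" using c by (simp add: field_simps)
  have "normEN N u \<le> 4 * real N * normN N u" by (rule normEN_le_normN[OF u(1)])
  also have "\<dots> \<le> 4 * real N * (normN N v / c)"
    using nu by (intro mult_left_mono) auto
  also have "\<dots> = 4 * real N / c * normN N v" by simp
  finally show ?thesis by (simp only: u_def c_def)
qed

lemma normEN_inv_into_Dlin_diff_le:
  fixes e :: real
  assumes N: "1 \<le> N" and m: "-1 < m"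
    and a: "\<And>k. k \<in> {1..N-1} \<Longrightarrow> m \<le> a k" and b: "\<And>k. k \<in> {1..N-1} \<Longrightarrow> m \<le> b k"
    and close: "\<And>k. k \<in> {1..N-1} \<Longrightarrow> \<bar>a k - b k\<bar> \<le> e" and "0 \<le> e" and h: "h \<in> EN N"
  defines "c \<equiv> (1 + m) / (real N)\<^sup>2"
  shows "normEN N (\<lambda>k. inv_into (EN N) (Dlin N b) h k - inv_into (EN N) (Dlin N a) h k)
           \<le> 4 * real N / c * (e / c * normN N h)"
proof -
  define u where "u = inv_into (EN N) (Dlin N a) h"
  define u' where "u' = inv_into (EN N) (Dlin N b) h"
  define v where "v = (\<lambda>k. Dlin N a u' k - Dlin N b u' k)"
  have c: "0 < c" using m N by (simp add: c_def)
  have bij_a: "bij_betw (Dlin N a) (EN N) (EN N)" by (rule bij_betw_Dlin[OF N m a])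
  have bij_b: "bij_betw (Dlin N b) (EN N) (EN N)" by (rule bij_betw_Dlin[OF N m b])
  have u: "u \<in> EN N" "Dlin N a u = h"
    using bij_betw_inv_into_self[OF bij_a h] by (simp_all add: u_def)
  have u': "u' \<in> EN N" "Dlin N b u' = h"
    using bij_betw_inv_into_self[OF bij_b h] by (simp_all add: u'_def)
  have "v = Dlin N a (\<lambda>k. u' k - u k)"
    using lin_on_diff[OF lin_on_Dlin u'(1) u(1) EN_scale] u'(2) u(2) by (simp add: v_def)
  then have inv_v: "inv_into (EN N) (Dlin N a) v = (\<lambda>k. u' k - u k)"
    using bij_betw_inv_into_left[OF bij_a EN_diff[OF u'(1) u(1)]] by simp
  have "c * normN N u' \<le> normN N h"
    using normN_Dlin_ge[where a = b, OF u'(1) b] u'(2) by (simp add: c_def)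
  then have nu': "normN N u' \<le> normN N h / c" using c by (simp add: field_simps)
  have "normEN N (\<lambda>k. u' k - u k) \<le> 4 * real N / c * normN N v"
    using normEN_inv_into_Dlin_le[where a = a and v = v, OF N m a] inv_v
    by (simp add: c_def v_def EN_diff Dop_in_EN)
  also have "\<dots> \<le> 4 * real N / c * (e * normN N u')"
    using normN_Dlin_diff_le[OF N close \<open>0 \<le> e\<close>] c by (intro mult_left_mono) (simp_all add: v_def)
  also have "\<dots> \<le> 4 * real N / c * (e * (normN N h / c))"
    using nu' c \<open>0 \<le> e\<close> by (intro mult_left_mono) auto
  finally show ?thesis by (simp add: u_def u'_def)
qed

lemma Dop_inverse_derivative_continuous:
  fixes e :: real
  assumes N: "1 \<le> N" and m: "-1 < m"
    and der: "\<And>k s. k \<in> {1..N-1} \<Longrightarrow> (g k has_real_derivative g' k s) (at s)"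
    and lower: "\<And>k s. k \<in> {1..N-1} \<Longrightarrow> m \<le> g' k s"
    and cont: "\<And>k. k \<in> {1..N-1} \<Longrightarrow> continuous_on UNIV (g' k)"
    and w: "w \<in> EN N" and e: "0 < e"
  defines "H \<equiv> inv_into (EN N) (Dop N g)"
  shows "\<exists>d>0. \<forall>w'\<in>EN N. normN N (\<lambda>k. w' k - w k) < d \<longrightarrow>
           opnorm (normN N) (normEN N) (EN N)
             (\<lambda>h k. inv_into (EN N) (Dlin N (\<lambda>k. g' k (H w' k))) h k
                  - inv_into (EN N) (Dlin N (\<lambda>k. g' k (H w k))) h k) \<le> e"
proof -
  define c where "c = (1 + m) / (real N)\<^sup>2"
  define e1 where "e1 = e * c\<^sup>2 / (4 * real N)"
  have c: "0 < c" and e1: "0 < e1" using m N e by (simp_all add: c_def e1_def)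
  have bij: "bij_betw (Dop N g) (EN N) (EN N)" by (rule bij_betw_Dop[where g' = g', OF N m der lower])
  have H: "H v \<in> EN N" if "v \<in> EN N" for v
    unfolding H_def by (rule bij_betw_inv_into_self(1)[OF bij that])
  obtain d where d: "0 < d" and close: "\<And>y k. y \<in> EN N \<Longrightarrow> normN N (\<lambda>k. y k - H w k) < d \<Longrightarrow>
      k \<in> {1..N-1} \<Longrightarrow> \<bar>g' k (y k) - g' k (H w k)\<bar> \<le> e1"
    using coefficients_close[where a = g', OF cont H[OF w] e1] by blast
  show ?thesis
  proof (intro exI[of _ "c * d"] conjI ballI impI)
    fix w' assume w': "w' \<in> EN N" and small: "normN N (\<lambda>k. w' k - w k) < c * d"
    have "c * normN N (\<lambda>k. H w' k - H w k) \<le> normN N (\<lambda>k. w' k - w k)"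
      unfolding c_def H_def by (rule normN_inv_into_Dop_diff_le[where g' = g', OF N m w' w der lower])
    then have "c * normN N (\<lambda>k. H w' k - H w k) < c * d" using small by linarith
    then have "normN N (\<lambda>k. H w' k - H w k) < d" using c by simp
    note close = close[OF H[OF w'] this]
    show "opnorm (normN N) (normEN N) (EN N)
        (\<lambda>h k. inv_into (EN N) (Dlin N (\<lambda>k. g' k (H w' k))) h k
             - inv_into (EN N) (Dlin N (\<lambda>k. g' k (H w k))) h k) \<le> e"
    proof (rule opnorm_le[OF _ EN_zero])
      fix h assume h: "h \<in> EN N" and "normN N h \<le> 1"
      have "normEN N (\<lambda>k. inv_into (EN N) (Dlin N (\<lambda>k. g' k (H w' k))) h k
             - inv_into (EN N) (Dlin N (\<lambda>k. g' k (H w k))) h k)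
          \<le> 4 * real N / c * (e1 / c * normN N h)"
        unfolding c_def
        by (rule normEN_inv_into_Dlin_diff_le[OF N m lower lower _ _ h])
           (use close e1 in \<open>auto simp: abs_minus_commute\<close>)
      also have "\<dots> \<le> 4 * real N / c * (e1 / c * 1)"
        using \<open>normN N h \<le> 1\<close> c e1 by (intro mult_left_mono) auto
      also have "\<dots> = e" using c N by (simp add: e1_def power2_eq_square)
      finally show "normEN N (\<lambda>k. inv_into (EN N) (Dlin N (\<lambda>k. g' k (H w' k))) h k
             - inv_into (EN N) (Dlin N (\<lambda>k. g' k (H w k))) h k) \<le> e" .
    qed simp
  qed (use c d in simp)
qed

lemma C1_on_inv_into_Dop:
  assumes N: "1 \<le> N" and m: "-1 < m"
    and der: "\<And>k s. k \<in> {1..N-1} \<Longrightarrow> (g k has_real_derivative g' k s) (at s)"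
    and lower: "\<And>k s. k \<in> {1..N-1} \<Longrightarrow> m \<le> g' k s"
    and cont: "\<And>k. k \<in> {1..N-1} \<Longrightarrow> continuous_on UNIV (g' k)"
  shows "C1_on (normN N) (normEN N) (EN N) (inv_into (EN N) (Dop N g))"
proof -
  define H where "H = inv_into (EN N) (Dop N g)"
  define M where "M w = inv_into (EN N) (Dlin N (\<lambda>k. g' k (H w k)))" for w
  define c where "c = (1 + m) / (real N)\<^sup>2"
  have c: "0 < c" using m N by (simp add: c_def)
  have bij: "bij_betw (Dop N g) (EN N) (EN N)" by (rule bij_betw_Dop[where g' = g', OF N m der lower])
  have H: "H v \<in> EN N" "Dop N g (H v) = v" if "v \<in> EN N" for v
    unfolding H_def by (rule bij_betw_inv_into_self[OF bij that])+
  have a: "m \<le> g' k (x k)" if "k \<in> {1..N-1}" for x k using lower[OF that] .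
  have "has_deriv_on (normN N) (normEN N) (EN N) H (M w) w" if w: "w \<in> EN N" for w
  proof (rule has_deriv_on_inverse[where S = "EN N" and nx = "normEN N" and ny = "normN N"
        and F = "Dop N g" and L = "Dlin N (\<lambda>k. g' k (H w k))" and x = "H w"
        and K = "4 * real N / c" and C = "4 * real N / c"])
    show "has_deriv_on (normEN N) (normN N) (EN N) (Dop N g) (Dlin N (\<lambda>k. g' k (H w k))) (H w)"
      by (rule has_deriv_on_Dop[where g' = g', OF N H(1)[OF w] der])
    show "H v \<in> EN N \<and> Dop N g (H v) = v" if "v \<in> EN N" for v using H[OF that] by blast
    show "M w (Dlin N (\<lambda>k. g' k (H w k)) u) = u" if "u \<in> EN N" for u
      unfolding M_def using bij_betw_inv_into_left[OF bij_betw_Dlin[OF N m a] that] .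
    show "lin_on (EN N) (M w)"
      unfolding M_def by (rule lin_on_inv_into[OF lin_on_Dlin bij_betw_Dlin[OF N m a] EN_add EN_scale])
    show "normEN N (M w v) \<le> 4 * real N / c * normN N v" if "v \<in> EN N" for v
      unfolding M_def c_def by (rule normEN_inv_into_Dlin_le[OF N m a that])
    show "normEN N (\<lambda>k. H (\<lambda>j. w j + v j) k - H w k) \<le> 4 * real N / c * normN N v"
      if "v \<in> EN N" for v
      using normEN_inv_into_Dop_diff_le[where g' = g', OF N m EN_add[OF w that] w der lower]
      by (simp add: H_def c_def)
  qed (use c N w in \<open>simp_all add: EN_add EN_scale normEN_uminus\<close>)
  moreover have "\<exists>d>0. \<forall>w'\<in>EN N. normN N (\<lambda>k. w' k - w k) < d \<longrightarrow>
      opnorm (normN N) (normEN N) (EN N) (\<lambda>h k. M w' h k - M w h k) \<le> e"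
    if "w \<in> EN N" "0 < e" for w e
    using Dop_inverse_derivative_continuous[where g' = g', OF N m der lower cont that]
    by (simp add: M_def H_def)
  ultimately show ?thesis unfolding C1_on_def H_def by blast
qed

lemma diffeo_on_Dop:
  assumes N: "1 \<le> N" and m: "-1 < m"
    and der: "\<And>k s. k \<in> {1..N-1} \<Longrightarrow> (g k has_real_derivative g' k s) (at s)"
    and lower: "\<And>k s. k \<in> {1..N-1} \<Longrightarrow> m \<le> g' k s"
    and cont: "\<And>k. k \<in> {1..N-1} \<Longrightarrow> continuous_on UNIV (g' k)"
  shows "diffeo_on (normEN N) (normN N) (EN N) (Dop N g)"
  unfolding diffeo_on_def
  using bij_betw_Dop[where g' = g', OF N m der lower] C1_on_Dop[where g = g, OF N der cont]
    C1_on_inv_into_Dop[where g' = g', OF N m der lower cont]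
  by blast

theorem theorem6:
  fixes N :: nat and f fx :: "real \<Rightarrow> real \<Rightarrow> real"
  assumes N: "N \<ge> 2"
    and f_cont: "continuous_on ({0..1} \<times> UNIV) (\<lambda>(t, x). f t x)"
    and fx_deriv: "\<forall>t\<in>{0..1}. \<forall>x. (f t has_real_derivative fx t x) (at x)"
    and fx_cont: "continuous_on ({0..1} \<times> UNIV) (\<lambda>(t, x). fx t x)"
    and growth: "\<exists>A B. 0 < A \<and> A < 1 \<and> 0 < B \<and>
                   (\<forall>t\<in>{0..1}. \<forall>x. \<bar>f t x\<bar> \<le> A * \<bar>x\<bar> + B)"
    and fx_inf: "bdd_below ((\<lambda>(t, x). fx t x) ` ({0..1} \<times> UNIV))"
                "(INF p\<in>{0..1} \<times> UNIV. fx (fst p) (snd p)) > -1"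
  shows "diffeo_on (normEN N) (normN N) (EN N) (DN N f)"
proof -
  define m where "m = (INF p\<in>{0..1} \<times> UNIV. fx (fst p) (snd p))"
  have nodes: "real k / real N \<in> {0..1}" if "k \<in> {1..N-1}" for k
    using that N by auto
  have "bdd_below ((\<lambda>p. fx (fst p) (snd p)) ` ({0..1} \<times> UNIV))"
    using fx_inf(1) by (simp add: case_prod_beta')
  then have lower: "m \<le> fx t s" if "t \<in> {0..1}" for t s
    unfolding m_def using cINF_lower[of "\<lambda>p. fx (fst p) (snd p)" _ "(t, s)"] that by simp
  have cont: "continuous_on UNIV (fx t)" if "t \<in> {0..1}" for t
  proof -
    have "continuous_on UNIV (\<lambda>s. (\<lambda>(t, x). fx t x) (t, s))"
      by (rule continuous_on_compose2[OF fx_cont]) (use that in \<open>auto intro!: continuous_intros\<close>)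
    then show ?thesis by simp
  qed
  have "diffeo_on (normEN N) (normN N) (EN N) (Dop N (\<lambda>k. f (real k / real N)))"
    by (rule diffeo_on_Dop[where g' = "\<lambda>k. fx (real k / real N)"])
      (use N fx_inf(2) fx_deriv nodes lower cont in \<open>auto simp: m_def\<close>)
  then show ?thesis by (simp add: DN_eq_Dop)
qed

end
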